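(* Let $D$ be a digraph with $\chi(D)>\omega$. Then the one-way infinite directed path $\vec P_\omega$ embeds into $D$. Moreover, if $T$ is any orientation of the rooted tree in which every vertex has countably infinitely many children, then $T$ embeds into $D$.
   Context: A digraph is a pair $D=(V,E)$ with $E\subseteq V^2$ such that $uv\in E$ implies $vu\notin E$. The dichromatic number $\chi(D)$ is the minimal number of acyclic vertex sets (sets inducing no directed cycle) needed to cover the vertex set of $D$. Embedding means as a not necessarily induced subdigraph. An orientation of an undirected graph assigns to each edge exactly one direction. *)

theory Defs
  imports Main "HOL-Library.Countable_Set"
begin

definition digraph :: "'a set \<Rightarrow> ('a \<times> 'a) set \<Rightarrow> bool" where
  "digraph V E \<longleftrightarrow> E \<subseteq> V \<times> V \<and> (\<forall>u v. (u, v) \<in> E \<longrightarrow> (v, u) \<notin> E)"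

definition acyclic_set :: "('a \<times> 'a) set \<Rightarrow> 'a set \<Rightarrow> bool" where
  "acyclic_set E A \<longleftrightarrow> acyclic (E \<inter> (A \<times> A))"

definition dichromatic_le_omega :: "'a set \<Rightarrow> ('a \<times> 'a) set \<Rightarrow> bool" where
  "dichromatic_le_omega V E \<longleftrightarrow>
     (\<exists>\<A>. countable \<A> \<and> (\<forall>A\<in>\<A>. A \<subseteq> V \<and> acyclic_set E A) \<and> V \<subseteq> \<Union>\<A>)"

definition embeds :: "'b set \<Rightarrow> ('b \<times> 'b) set \<Rightarrow> 'a set \<Rightarrow> ('a \<times> 'a) set \<Rightarrow> bool" where
  "embeds VH EH V E \<longleftrightarrow>
     (\<exists>f. inj_on f VH \<and> f ` VH \<subseteq> V \<and> (\<forall>(x, y) \<in> EH. (f x, f y) \<in> E))"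

definition ray_edges :: "(nat \<times> nat) set" where
  "ray_edges = {(n, Suc n) | n. True}"

text \<open>The rooted tree in which every vertex has countably infinitely many children:
  vertices are finite sequences of naturals, the root is [], the children of s are s @ [n].\<close>
definition tree_orientation_edges :: "(nat list \<Rightarrow> nat \<Rightarrow> bool) \<Rightarrow> (nat list \<times> nat list) set" where
  "tree_orientation_edges d =
     {(s, s @ [n]) | s n. d s n} \<union> {(s @ [n], s) | s n. \<not> d s n}"

end

theory Submission
  imports Defs
begin

text \<open>Call a partial assignment x \<mapsto> F(x) of finite vertex sets with x \<notin> F(x) cycle-breaking
  if every directed cycle through its domain has an edge joining some x to a vertex of F(x), and
  take a maximal one by Zorn's lemma. If its domain covers V, the conflict relation y \<in> F(x) has
  finite out-degrees, hence (Zorn again) a proper colouring with countably many colours, and its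
  colour classes are acyclic; so \<chi>(D) \<le> \<omega>. Otherwise the uncovered vertices U have infinitely
  many out- and in-neighbours inside U, since a vertex with only finitely many could be added to
  the assignment with that finite set. Every orientation of the countably branching tree, and in
  particular the ray, then embeds into U greedily.\<close>

lemma countable_rtrancl_Image_finite_successors:
  assumes "\<And>x. finite (R x)"
  shows "countable ({(x, y). y \<in> R x}\<^sup>* `` {v})"
proof -
  let ?r = "{(x, y). y \<in> R x}"
  have "finite ((?r ^^ n) `` {v})" for n
  proof (induction n)
    case (Suc n)
    have "(?r ^^ Suc n) `` {v} = (\<Union>x\<in>(?r ^^ n) `` {v}. R x)"
      by (auto simp: relcomp_Image)
    then show ?case using Suc assms by simp
  qed simp
  then have "countable (\<Union>n. (?r ^^ n) `` {v})"
    by (intro countable_UN) (auto intro: countable_finite)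
  moreover have "?r\<^sup>* `` {v} = (\<Union>n. (?r ^^ n) `` {v})"
    by (auto simp: rtrancl_is_UN_relpow)
  ultimately show ?thesis by simp
qed

lemma finite_Image_single_valued:
  assumes "single_valued r" "finite A"
  shows "finite (r `` A)"
proof (rule finite_subset)
  show "r `` A \<subseteq> (\<lambda>y. THE z. (y, z) \<in> r) ` A"
    using assms(1) by (auto intro!: image_eqI the_equality[symmetric] dest: single_valuedD)
qed (use assms(2) in simp)

lemma single_valued_Union_chain:
  assumes "C \<in> chains A" "\<And>X. X \<in> C \<Longrightarrow> single_valued X"
  shows "single_valued (\<Union>C)"
proof (rule single_valuedI)
  fix x y z assume "(x, y) \<in> \<Union>C" "(x, z) \<in> \<Union>C"
  then obtain X Y where "X \<in> C" "Y \<in> C" "(x, y) \<in> X" "(x, z) \<in> Y" by blast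
  with assms show "y = z"
    using chainsD[OF assms(1)] by (metis single_valuedD subsetD)
qed

definition closed_partial_colouring :: "('a \<Rightarrow> 'a set) \<Rightarrow> ('a \<times> nat) set \<Rightarrow> bool" where
  "closed_partial_colouring R G \<longleftrightarrow> single_valued G
     \<and> (\<forall>x\<in>Domain G. R x \<subseteq> Domain G)
     \<and> (\<forall>x k y k'. (x, k) \<in> G \<longrightarrow> y \<in> R x \<longrightarrow> (y, k') \<in> G \<longrightarrow> k \<noteq> k')"

lemma closed_partial_colouring_Union_chain:
  assumes "C \<in> chains {G. closed_partial_colouring R G}"
  shows "closed_partial_colouring R (\<Union>C)"
proof -
  have G: "closed_partial_colouring R G" if "G \<in> C" for G
    using assms chainsD2 that by blast
  have "single_valued (\<Union>C)"
    by (rule single_valued_Union_chain[OF assms]) (use G in \<open>simp add: closed_partial_colouring_def\<close>)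
  moreover have "R x \<subseteq> Domain (\<Union>C)" if "x \<in> Domain (\<Union>C)" for x
    using that G unfolding closed_partial_colouring_def by blast
  moreover have "k \<noteq> k'" if "(x, k) \<in> \<Union>C" "y \<in> R x" "(y, k') \<in> \<Union>C" for x k y k'
  proof -
    from that obtain X Y where "X \<in> C" "Y \<in> C" "(x, k) \<in> X" "(y, k') \<in> Y" by blast
    with that show ?thesis
      using G chainsD[OF assms] unfolding closed_partial_colouring_def by (metis subsetD)
  qed
  ultimately show ?thesis
    unfolding closed_partial_colouring_def by blast
qed

text \<open>Colour v together with the countably many uncoloured vertices reachable from it, giving x
  the colour prod_encode (i, k), where i is the index of x in an enumeration of these vertices and
  k avoids the finitely many colours on the already coloured successors of x.\<close>
lemma closed_partial_colouring_extend:
  assumes fin: "\<And>x. finite (R x)" and irrefl: "\<And>x. x \<notin> R x"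
    and M: "closed_partial_colouring R M" and v: "v \<notin> Domain M"
  obtains G where "closed_partial_colouring R G" "M \<subseteq> G" "v \<in> Domain G"
proof -
  have M_sv: "single_valued M" and M_closed: "\<And>x. x \<in> Domain M \<Longrightarrow> R x \<subseteq> Domain M"
    and M_proper: "\<And>x k y k'. (x, k) \<in> M \<Longrightarrow> y \<in> R x \<Longrightarrow> (y, k') \<in> M \<Longrightarrow> k \<noteq> k'"
    using M unfolding closed_partial_colouring_def by blast+
  define reach where "reach = {(x, y). y \<in> R x}\<^sup>* `` {v}"
  define C where "C = reach - Domain M"
  have "countable C"
    unfolding C_def reach_def
    by (rule countable_subset[OF _ countable_rtrancl_Image_finite_successors[of R v, OF fin]]) blast
  then have inj_idx: "inj_on (to_nat_on C) C" by (rule inj_on_to_nat_on)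
  have C_step: "y \<in> Domain M \<or> y \<in> C" if "x \<in> C" "y \<in> R x" for x y
    using that unfolding C_def reach_def by (auto intro: rtrancl_into_rtrancl)
  have "\<exists>k. prod_encode (i, k) \<notin> M `` R x" for i x
  proof -
    have "finite {k. prod_encode (i, k) \<in> M `` R x}"
      using finite_Image_single_valued[OF M_sv fin]
      by (rule finite_vimageI[where h = "\<lambda>k. prod_encode (i, k)", unfolded vimage_def])
        (simp add: inj_def)
    then show ?thesis using ex_new_if_finite[OF infinite_UNIV_nat] by blast
  qed
  then obtain fresh where fresh: "\<And>i x. prod_encode (i, fresh i x) \<notin> M `` R x"
    by metis
  define col where "col x = prod_encode (to_nat_on C x, fresh (to_nat_on C x) x)" for x
  define G where "G = M \<union> (\<lambda>x. (x, col x)) ` C"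
  have "single_valued G"
    unfolding G_def C_def using M_sv by (auto simp: single_valued_def)
  moreover have "R x \<subseteq> Domain G" if "x \<in> Domain G" for x
  proof (cases "x \<in> Domain M")
    case True
    then show ?thesis using M_closed unfolding G_def by blast
  next
    case False
    then have "x \<in> C" using that unfolding G_def by auto
    then have "R x \<subseteq> Domain M \<union> C" using C_step by blast
    then show ?thesis unfolding G_def by auto
  qed
  moreover have "k \<noteq> k'" if xk: "(x, k) \<in> G" and y: "y \<in> R x" and yk: "(y, k') \<in> G"
    for x k y k'
  proof (cases "x \<in> Domain M")
    case True
    then have "y \<in> Domain M" using M_closed y by blast
    then have "(y, k') \<in> M" and "(x, k) \<in> M"
      using xk yk True unfolding G_def C_def by auto
    then show ?thesis using M_proper y by blast
  next
    case False
    then have x: "x \<in> C" "k = col x" using xk unfolding G_def by auto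
    show ?thesis
    proof (cases "y \<in> Domain M")
      case True
      then have "k' \<in> M `` R x" using yk y unfolding G_def C_def by auto
      then show ?thesis using fresh x unfolding col_def by metis
    next
      case False
      then have "y \<in> C" "k' = col y" using yk unfolding G_def by auto
      moreover have "x \<noteq> y" using irrefl y by blast
      ultimately show ?thesis
        using x inj_idx unfolding col_def by (auto dest: inj_onD)
    qed
  qed
  ultimately have "closed_partial_colouring R G"
    unfolding closed_partial_colouring_def by blast
  moreover have "v \<in> C" unfolding C_def reach_def using v by blast
  ultimately show thesis using that unfolding G_def by blast
qed

lemma finite_successors_countable_colouring:
  fixes R :: "'a \<Rightarrow> 'a set"
  assumes "\<And>x. finite (R x)" "\<And>x. x \<notin> R x"
  obtains c :: "'a \<Rightarrow> nat" where "\<And>x y. y \<in> R x \<Longrightarrow> c x \<noteq> c y"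
proof -
  obtain M where M: "closed_partial_colouring R M"
    and max: "\<And>G. closed_partial_colouring R G \<Longrightarrow> M \<subseteq> G \<Longrightarrow> G = M"
    using Zorn_Lemma[of "{G. closed_partial_colouring R G}"]
      closed_partial_colouring_Union_chain by blast
  have "\<forall>v. \<exists>k. (v, k) \<in> M"
    using closed_partial_colouring_extend[OF assms M] max by (metis Domain_iff)
  then obtain c where c: "\<And>x. (x, c x) \<in> M" by metis
  show thesis
  proof (rule that)
    fix x y assume "y \<in> R x"
    then show "c x \<noteq> c y"
      using M c unfolding closed_partial_colouring_def by blast
  qed
qed

definition directed_cycle :: "('a \<times> 'a) set \<Rightarrow> (nat \<Rightarrow> 'a) \<Rightarrow> nat \<Rightarrow> bool" where
  "directed_cycle E p n \<longleftrightarrow> 0 < n \<and> p n = p 0 \<and> (\<forall>i<n. (p i, p (Suc i)) \<in> E)"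

lemma trancl_loop_imp_directed_cycle:
  assumes "(x, x) \<in> (E \<inter> A \<times> A)\<^sup>+"
  obtains p n where "directed_cycle E p n" "\<And>i. i \<le> n \<Longrightarrow> p i \<in> A"
proof -
  obtain n where n: "0 < n" "(x, x) \<in> (E \<inter> A \<times> A) ^^ n"
    using assms by (auto simp: trancl_power)
  then obtain p where p: "p 0 = x" "p n = x" "\<forall>i<n. (p i, p (Suc i)) \<in> E \<inter> A \<times> A"
    by (auto simp: relpow_fun_conv)
  have "p i \<in> A" if "i \<le> n" for i
    using that n(1) p by (cases i) (auto simp: Suc_le_eq)
  with n p show thesis using that unfolding directed_cycle_def by auto
qed

lemma directed_cycle_predecessor:
  assumes "directed_cycle E p n" "j < n"
  obtains i where "i < n" "p (Suc i) = p j"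
proof (cases j)
  case 0
  with assms that[of "n - 1"] show thesis unfolding directed_cycle_def by simp
next
  case (Suc i)
  with assms that[of i] show thesis by simp
qed

definition conflicts :: "('a \<times> 'b set) set \<Rightarrow> ('a \<times> 'b) set" where
  "conflicts X = {(x, y). \<exists>F. (x, F) \<in> X \<and> y \<in> F}"

lemma conflicts_mono: "X \<subseteq> Y \<Longrightarrow> conflicts X \<subseteq> conflicts Y"
  unfolding conflicts_def by blast

definition cycle_breaking :: "('a \<times> 'a) set \<Rightarrow> ('a \<times> 'a set) set \<Rightarrow> bool" where
  "cycle_breaking E X \<longleftrightarrow> single_valued X \<and> (\<forall>(x, F) \<in> X. finite F \<and> x \<notin> F)
     \<and> (\<forall>p n. directed_cycle E p n \<longrightarrow> (\<exists>i<n. p i \<in> Domain X)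
          \<longrightarrow> (\<exists>i<n. (p i, p (Suc i)) \<in> conflicts X \<union> (conflicts X)\<inverse>))"

lemma cycle_breaking_Union_chain:
  assumes "C \<in> chains {X. cycle_breaking E X}"
  shows "cycle_breaking E (\<Union>C)"
proof -
  have X: "cycle_breaking E X" if "X \<in> C" for X
    using assms chainsD2 that by blast
  have "single_valued (\<Union>C)"
    by (rule single_valued_Union_chain[OF assms]) (use X in \<open>simp add: cycle_breaking_def\<close>)
  moreover have "\<forall>(x, F) \<in> \<Union>C. finite F \<and> x \<notin> F"
    using X unfolding cycle_breaking_def by blast
  moreover have "\<exists>i<n. (p i, p (Suc i)) \<in> conflicts (\<Union>C) \<union> (conflicts (\<Union>C))\<inverse>"
    if "directed_cycle E p n" "\<exists>i<n. p i \<in> Domain (\<Union>C)" for p n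
  proof -
    from that obtain X where "X \<in> C" "\<exists>i<n. p i \<in> Domain X" by blast
    then have "\<exists>i<n. (p i, p (Suc i)) \<in> conflicts X \<union> (conflicts X)\<inverse>"
      using X that(1) unfolding cycle_breaking_def by blast
    moreover have "conflicts X \<subseteq> conflicts (\<Union>C)"
      using \<open>X \<in> C\<close> by (intro conflicts_mono) blast
    ultimately show ?thesis by blast
  qed
  ultimately show ?thesis
    unfolding cycle_breaking_def by blast
qed

lemma cycle_breaking_total_imp_dichromatic_le_omega:
  assumes X: "cycle_breaking E X" and V: "V \<subseteq> Domain X"
  shows "dichromatic_le_omega V E"
proof -
  have sv: "single_valued X" and X_fin: "\<And>x F. (x, F) \<in> X \<Longrightarrow> finite F \<and> x \<notin> F"
    using X unfolding cycle_breaking_def by blast+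
  have "finite (\<Union>(X `` {x}))" for x
    using X_fin by (intro finite_Union finite_Image_single_valued[OF sv]) auto
  moreover have "x \<notin> \<Union>(X `` {x})" for x
    using X_fin by blast
  ultimately obtain c :: "'a \<Rightarrow> nat" where c: "\<And>x y. y \<in> \<Union>(X `` {x}) \<Longrightarrow> c x \<noteq> c y"
    by (rule finite_successors_countable_colouring) blast
  have c_conflicts: "c x \<noteq> c y" if "(x, y) \<in> conflicts X" for x y
    using that c unfolding conflicts_def by blast
  have "acyclic_set E {v \<in> V. c v = k}" for k
    unfolding acyclic_set_def acyclic_def
  proof (intro allI notI)
    fix x assume "(x, x) \<in> (E \<inter> {v \<in> V. c v = k} \<times> {v \<in> V. c v = k})\<^sup>+"
    then obtain p n where p: "directed_cycle E p n" and pk: "\<And>i. i \<le> n \<Longrightarrow> p i \<in> V \<and> c (p i) = k"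
      by (rule trancl_loop_imp_directed_cycle) blast
    have "p 0 \<in> Domain X" using pk[of 0] V by blast
    moreover have "0 < n" using p unfolding directed_cycle_def by simp
    ultimately obtain i where "i < n" "(p i, p (Suc i)) \<in> conflicts X \<union> (conflicts X)\<inverse>"
      using X p unfolding cycle_breaking_def by blast
    moreover have "c (p i) = c (p (Suc i))" using pk \<open>i < n\<close> by simp
    ultimately show False using c_conflicts by fastforce
  qed
  then show ?thesis
    unfolding dichromatic_le_omega_def
    by (intro exI[of _ "range (\<lambda>k. {v \<in> V. c v = k})"]) auto
qed

lemma cycle_breaking_insert:
  assumes X: "cycle_breaking E X" and v: "v \<notin> Domain X" and F: "finite F" "v \<notin> F"
    and covers: "(\<forall>w. (v, w) \<in> E \<longrightarrow> w \<notin> Domain X \<longrightarrow> w \<in> F)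
      \<or> (\<forall>w. (w, v) \<in> E \<longrightarrow> w \<notin> Domain X \<longrightarrow> w \<in> F)"
  shows "cycle_breaking E (insert (v, F) X)"
proof -
  let ?Y = "insert (v, F) X"
  have "\<exists>i<n. (p i, p (Suc i)) \<in> conflicts ?Y \<union> (conflicts ?Y)\<inverse>"
    if p: "directed_cycle E p n" and through: "\<exists>i<n. p i \<in> Domain ?Y" for p n
  proof (cases "\<exists>i<n. p i \<in> Domain X")
    case True
    then have "\<exists>i<n. (p i, p (Suc i)) \<in> conflicts X \<union> (conflicts X)\<inverse>"
      using X p unfolding cycle_breaking_def by blast
    moreover have "conflicts X \<subseteq> conflicts ?Y" by (rule conflicts_mono) blast
    ultimately show ?thesis by blast
  next
    case False
    then have outside: "p i \<notin> Domain X" if "i \<le> n" for i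
      using that p unfolding directed_cycle_def by (metis le_neq_implies_less)
    from through False obtain j where j: "j < n" "p j = v" by auto
    have edge: "(p i, p (Suc i)) \<in> E" if "i < n" for i
      using p that unfolding directed_cycle_def by blast
    from covers show ?thesis
    proof
      assume "\<forall>w. (v, w) \<in> E \<longrightarrow> w \<notin> Domain X \<longrightarrow> w \<in> F"
      then have "p (Suc j) \<in> F" using edge[OF j(1)] outside[of "Suc j"] j by simp
      with j show ?thesis unfolding conflicts_def by blast
    next
      assume in_F: "\<forall>w. (w, v) \<in> E \<longrightarrow> w \<notin> Domain X \<longrightarrow> w \<in> F"
      obtain i where i: "i < n" "p (Suc i) = v"
        using directed_cycle_predecessor[OF p j(1)] j(2) by metis
      then have "p i \<in> F" using in_F edge[OF i(1)] outside[of i] by simp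
      with i show ?thesis unfolding conflicts_def by blast
    qed
  qed
  with X v F show ?thesis
    unfolding cycle_breaking_def single_valued_def by auto
qed

definition infinite_min_degree :: "('a \<times> 'a) set \<Rightarrow> 'a set \<Rightarrow> bool" where
  "infinite_min_degree E U \<longleftrightarrow>
     (\<forall>v\<in>U. infinite {w \<in> U. (v, w) \<in> E} \<and> infinite {w \<in> U. (w, v) \<in> E})"

lemma not_dichromatic_le_omega_imp_infinite_min_degree:
  assumes dg: "digraph V E" and not_le: "\<not> dichromatic_le_omega V E"
  obtains U where "U \<subseteq> V" "U \<noteq> {}" "infinite_min_degree E U"
proof -
  have EV: "E \<subseteq> V \<times> V" and loopfree: "\<And>v. (v, v) \<notin> E"
    using dg unfolding digraph_def by blast+
  obtain M where M: "cycle_breaking E M"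
    and max: "\<And>X. cycle_breaking E X \<Longrightarrow> M \<subseteq> X \<Longrightarrow> X = M"
    using Zorn_Lemma[of "{X. cycle_breaking E X}"] cycle_breaking_Union_chain by blast
  define U where "U = V - Domain M"
  have "U \<noteq> {}"
    using cycle_breaking_total_imp_dichromatic_le_omega[OF M] not_le unfolding U_def by blast
  moreover have "infinite_min_degree E U"
    unfolding infinite_min_degree_def
  proof (rule ccontr)
    assume "\<not> (\<forall>v\<in>U. infinite {w \<in> U. (v, w) \<in> E} \<and> infinite {w \<in> U. (w, v) \<in> E})"
    then obtain v F where v: "v \<in> U" and F: "finite F"
      and "F = {w \<in> U. (v, w) \<in> E} \<or> F = {w \<in> U. (w, v) \<in> E}"
      by blast
    then have "v \<notin> F"
      and "(\<forall>w. (v, w) \<in> E \<longrightarrow> w \<notin> Domain M \<longrightarrow> w \<in> F)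
        \<or> (\<forall>w. (w, v) \<in> E \<longrightarrow> w \<notin> Domain M \<longrightarrow> w \<in> F)"
      using EV loopfree unfolding U_def by blast+
    moreover have "v \<notin> Domain M" using v unfolding U_def by blast
    ultimately have "cycle_breaking E (insert (v, F) M)"
      using cycle_breaking_insert[OF M _ F] by blast
    then show False using max \<open>v \<notin> Domain M\<close> by blast
  qed
  moreover have "U \<subseteq> V" unfolding U_def by blast
  ultimately show thesis using that by blast
qed

definition node_index :: "nat list \<Rightarrow> nat" where
  "node_index s = list_encode (rev s)"

lemma inj_node_index: "inj node_index"
  unfolding node_index_def by (metis injI list_encode_eq rev_rev_ident)

lemma node_index_less_snoc: "node_index t < node_index (t @ [n])"
  unfolding node_index_def using le_prod_encode_2[of "list_encode (rev t)" n] by simp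

definition oriented_edge :: "('a \<times> 'a) set \<Rightarrow> bool \<Rightarrow> 'a \<Rightarrow> 'a \<Rightarrow> bool" where
  "oriented_edge E b x y \<longleftrightarrow> (if b then (x, y) \<in> E else (y, x) \<in> E)"

lemma embeds_tree_orientationI:
  assumes "inj f" "range f \<subseteq> V" "\<And>s n. oriented_edge E (d s n) (f s) (f (s @ [n]))"
  shows "embeds (UNIV :: nat list set) (tree_orientation_edges d) V E"
  unfolding embeds_def
proof (intro exI conjI)
  show "\<forall>(x, y) \<in> tree_orientation_edges d. (f x, f y) \<in> E"
    using assms(3) unfolding tree_orientation_edges_def oriented_edge_def by fastforce
qed (use assms in auto)

text \<open>Nodes are embedded one by one in the order of node_index, which lists every parent before
  its children; L holds the images of the nodes of index below k.\<close>
definition admissible_image ::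
    "'a set \<Rightarrow> ('a \<times> 'a) set \<Rightarrow> (nat list \<Rightarrow> nat \<Rightarrow> bool) \<Rightarrow> 'a list \<Rightarrow> nat \<Rightarrow> 'a \<Rightarrow> bool" where
  "admissible_image U E d L k w \<longleftrightarrow> w \<in> U \<and> w \<notin> set L \<and>
     (\<forall>t n. node_index (t @ [n]) = k \<longrightarrow> oriented_edge E (d t n) (L ! node_index t) w)"

primrec greedy_images ::
    "'a set \<Rightarrow> ('a \<times> 'a) set \<Rightarrow> (nat list \<Rightarrow> nat \<Rightarrow> bool) \<Rightarrow> nat \<Rightarrow> 'a list" where
  "greedy_images U E d 0 = []"
| "greedy_images U E d (Suc k) =
     greedy_images U E d k @ [SOME w. admissible_image U E d (greedy_images U E d k) k w]"

lemma length_greedy_images [simp]: "length (greedy_images U E d k) = k"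
  by (induction k) auto

lemma greedy_images_nth:
  assumes "i < k"
  shows "greedy_images U E d k ! i = greedy_images U E d (Suc i) ! i"
  using assms
proof (induction k)
  case (Suc k)
  then show ?case by (cases "i = k") (auto simp: nth_append less_Suc_eq)
qed simp

lemma admissible_image_exists:
  assumes U: "infinite_min_degree E U" "U \<noteq> {}" and L: "set L \<subseteq> U" "length L = k"
  shows "\<exists>w. admissible_image U E d L k w"
proof (cases "\<exists>t n. node_index (t @ [n]) = k")
  case True
  then obtain t n where k: "node_index (t @ [n]) = k" by blast
  have parent: "t' = t \<and> n' = n" if "node_index (t' @ [n']) = k" for t' n'
    using k that by (auto dest: injD[OF inj_node_index])
  let ?a = "L ! node_index t"
  have "node_index t < length L" using L(2) k node_index_less_snoc[of t n] by simp
  then have "?a \<in> U" using L(1) nth_mem by blast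
  then have "infinite {w \<in> U. oriented_edge E (d t n) ?a w}"
    using U(1) unfolding infinite_min_degree_def oriented_edge_def by (cases "d t n") auto
  then have "infinite ({w \<in> U. oriented_edge E (d t n) ?a w} - set L)"
    by (simp add: Diff_infinite_finite)
  then obtain w where "w \<in> U" "oriented_edge E (d t n) ?a w" "w \<notin> set L"
    using infinite_imp_nonempty by blast
  then show ?thesis unfolding admissible_image_def using parent by blast
next
  case False
  obtain u where "u \<in> U" using U(2) by blast
  then have "infinite {w \<in> U. (u, w) \<in> E}"
    using U(1) unfolding infinite_min_degree_def by blast
  then have "infinite U" by (rule infinite_super[rotated]) blast
  then obtain w where "w \<in> U - set L"
    using Diff_infinite_finite[of "set L" U] infinite_imp_nonempty by blast
  then show ?thesis unfolding admissible_image_def using False by blast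
qed

lemma greedy_images_subset:
  assumes "infinite_min_degree E U" "U \<noteq> {}"
  shows "set (greedy_images U E d k) \<subseteq> U"
proof (induction k)
  case (Suc k)
  then have "\<exists>w. admissible_image U E d (greedy_images U E d k) k w"
    using admissible_image_exists[OF assms] by simp
  then have "admissible_image U E d (greedy_images U E d k) k
      (SOME w. admissible_image U E d (greedy_images U E d k) k w)"
    by (rule someI_ex)
  with Suc show ?case by (simp add: admissible_image_def)
qed simp

lemma greedy_images_admissible_image:
  assumes "infinite_min_degree E U" "U \<noteq> {}"
  shows "admissible_image U E d (greedy_images U E d k) k (greedy_images U E d (Suc k) ! k)"
proof -
  have "\<exists>w. admissible_image U E d (greedy_images U E d k) k w"
    using admissible_image_exists[OF assms greedy_images_subset[OF assms]] by simp
  then show ?thesis by (simp add: nth_append someI_ex)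
qed

lemma infinite_min_degree_imp_embeds_tree:
  assumes UV: "U \<subseteq> V" and U: "infinite_min_degree E U" "U \<noteq> {}"
  shows "embeds (UNIV :: nat list set) (tree_orientation_edges d) V E"
proof -
  let ?G = "greedy_images U E d"
  define f where "f s = ?G (Suc (node_index s)) ! node_index s" for s
  have admissible: "admissible_image U E d (?G (node_index s)) (node_index s) (f s)" for s
    unfolding f_def by (rule greedy_images_admissible_image[OF U])
  have earlier: "?G k ! node_index s = f s" if "node_index s < k" for s k
    unfolding f_def using greedy_images_nth[OF that] .
  show ?thesis
  proof (rule embeds_tree_orientationI)
    show "inj f"
    proof (rule injI)
      fix s s' assume eq: "f s = f s'"
      have used: "f s \<in> set (?G k)" if "node_index s < k" for s k
        using nth_mem[of "node_index s" "?G k"] that earlier[OF that] by simp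
      have fresh: "f s \<notin> set (?G (node_index s))" for s
        using admissible unfolding admissible_image_def by blast
      have "\<not> node_index s < node_index s'" "\<not> node_index s' < node_index s"
        using used fresh eq by metis+
      then show "s = s'" by (auto dest: injD[OF inj_node_index])
    qed
    show "range f \<subseteq> V" using admissible UV unfolding admissible_image_def by blast
    show "oriented_edge E (d s n) (f s) (f (s @ [n]))" for s n
    proof -
      have "oriented_edge E (d s n) (?G (node_index (s @ [n])) ! node_index s) (f (s @ [n]))"
        using admissible[of "s @ [n]"] unfolding admissible_image_def by blast
      then show ?thesis using earlier[OF node_index_less_snoc] by simp
    qed
  qed
qed

lemma embeds_ray_if_embeds_tree:
  assumes "embeds (UNIV :: nat list set) (tree_orientation_edges (\<lambda>_ _. True)) V E"
  shows "embeds (UNIV :: nat set) ray_edges V E"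
proof -
  obtain f where f: "inj f" "range f \<subseteq> V"
    "\<forall>(x, y) \<in> tree_orientation_edges (\<lambda>_ _. True). (f x, f y) \<in> E"
    using assms unfolding embeds_def by blast
  let ?g = "\<lambda>n. f (replicate n (0::nat))"
  have "inj ?g"
  proof (rule injI)
    fix m n assume "?g m = ?g n"
    then have "replicate m (0::nat) = replicate n 0" using f(1) by (simp add: inj_eq)
    then show "m = n" using arg_cong[of _ _ length] by simp
  qed
  moreover have "(?g n, ?g (Suc n)) \<in> E" for n
    using f(3) unfolding tree_orientation_edges_def by (auto simp: replicate_append_same[symmetric])
  ultimately show ?thesis
    using f(2) unfolding embeds_def ray_edges_def by (intro exI[of _ ?g]) auto
qed

theorem corollary3p2:
  fixes V :: "'a set" and E :: "('a \<times> 'a) set"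
  assumes "digraph V E"
    and "\<not> dichromatic_le_omega V E"
  shows "embeds (UNIV :: nat set) ray_edges V E
    \<and> (\<forall>d. embeds (UNIV :: nat list set) (tree_orientation_edges d) V E)"
proof -
  obtain U where "U \<subseteq> V" "U \<noteq> {}" "infinite_min_degree E U"
    using not_dichromatic_le_omega_imp_infinite_min_degree[OF assms] .
  then have "\<forall>d. embeds (UNIV :: nat list set) (tree_orientation_edges d) V E"
    using infinite_min_degree_imp_embeds_tree by blast
  then show ?thesis using embeds_ray_if_embeds_tree by blast
qed

end
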